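(* Let $\Phi=\{f_t\}$ be an Anosov flow on a closed manifold $M$ of dimension $n$ preserving the smooth volume form $\Omega$ induced by a Riemannian metric $\mathcal{R}$ (norm $\|\cdot\|$), with splitting $TM=E^{ss}\oplus E^c\oplus E^{uu}$, $n_s=\dim E^{ss}$, $n_u=\dim E^{uu}$ and constants $c,\mu_\pm,\lambda_\pm$ as below. Let $\mathcal{R}'$ be a (continuous) Riemannian metric with norm $\|\cdot\|'$ for which the generator $X$ is a unit vector and $E^c\oplus E^{ss}\oplus E^{uu}$ is an orthogonal splitting; let $\Omega'=\phi\,\Omega$ be its volume form, $L=\max_M\phi/\min_M\phi$, let $b_-,b_+>0$ satisfy $b_-\|v\|\le\|v\|'\le b_+\|v\|$ for all $v\in TM$, and $b=b_+/b_-$. Then for all $v\in E^{ss}$, $w\in E^{uu}$ and $t\ge0$, $$\|Tf_{-t}(v\wedge w)\|'\le L\,(bc)^{n-3}\,\big(\mu_+^{n_s-1}\lambda_+^{n_u-1}\big)^t\,\|v\wedge w\|'.$$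
   Context: $\Phi$ Anosov means: non-singular flow with a $Tf_t$-invariant splitting $TM=E^{ss}\oplus E^c\oplus E^{uu}$, $E^c$ spanned by the generator $X$, and constants $c>0$, $0<\mu_-\le\mu_+<1$, $\lambda_+\ge\lambda_->1$ such that for $v\in E^{ss}$, $w\in E^{uu}$, $t\ge0$: $\frac1c\mu_-^t\|v\|\le\|Tf_t v\|\le c\mu_+^t\|v\|$ and $\frac1c\lambda_-^t\|w\|\le\|Tf_t w\|\le c\lambda_+^t\|w\|$. The norm $\|v\wedge w\|'$ of a wedge product is the area (volume) of the parallelepiped spanned, measured with respect to $\mathcal{R}'$. *)

theory Defs
  imports "HOL-Analysis.Analysis"
begin

text \<open>Abstract model of a (measurably trivialised) tangent bundle: fibres are real^'n,
 the derivative cocycle Tf_t at x is the matrix Df t x, a Riemannian metric is a field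
 of symmetric positive definite matrices G x.\<close>

definition ip :: "('m \<Rightarrow> real^'n^'n) \<Rightarrow> 'm \<Rightarrow> real^'n \<Rightarrow> real^'n \<Rightarrow> real" where
  "ip G x u v = u \<bullet> (G x *v v)"

definition nrm :: "('m \<Rightarrow> real^'n^'n) \<Rightarrow> 'm \<Rightarrow> real^'n \<Rightarrow> real" where
  "nrm G x v = sqrt (ip G x v v)"

definition wedge_norm :: "('m \<Rightarrow> real^'n^'n) \<Rightarrow> 'm \<Rightarrow> real^'n \<Rightarrow> real^'n \<Rightarrow> real" where
  "wedge_norm G x v w = sqrt (ip G x v v * ip G x w w - (ip G x v w)\<^sup>2)"

definition riem_metric :: "('m \<Rightarrow> real^'n^'n) \<Rightarrow> bool" where
  "riem_metric G \<longleftrightarrow> (\<forall>x. transpose (G x) = G x \<and> (\<forall>v. v \<noteq> 0 \<longrightarrow> ip G x v v > 0))"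

definition flow_cocycle :: "(real \<Rightarrow> 'm \<Rightarrow> 'm) \<Rightarrow> (real \<Rightarrow> 'm \<Rightarrow> real^'n^'n) \<Rightarrow> ('m \<Rightarrow> real^'n) \<Rightarrow> bool" where
  "flow_cocycle f Df X \<longleftrightarrow>
     (\<forall>x. f 0 x = x) \<and> (\<forall>s t x. f (s + t) x = f s (f t x)) \<and>
     (\<forall>x. Df 0 x = mat 1) \<and> (\<forall>s t x. Df (s + t) x = Df s (f t x) ** Df t x) \<and>
     (\<forall>x. X x \<noteq> 0) \<and> (\<forall>t x. Df t x *v X x = X (f t x))"

text \<open>The flow preserves the volume form induced by G (in the trivialisation the volume
 form at x is sqrt(det G x) times the standard determinant).\<close>
definition preserves_volume :: "(real \<Rightarrow> 'm \<Rightarrow> 'm) \<Rightarrow> (real \<Rightarrow> 'm \<Rightarrow> real^'n^'n) \<Rightarrow> ('m \<Rightarrow> real^'n^'n) \<Rightarrow> bool" where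
  "preserves_volume f Df G \<longleftrightarrow>
     (\<forall>t x. sqrt (det (G (f t x))) * det (Df t x) = sqrt (det (G x)))"

definition anosov :: "(real \<Rightarrow> 'm \<Rightarrow> 'm) \<Rightarrow> (real \<Rightarrow> 'm \<Rightarrow> real^'n^'n) \<Rightarrow> ('m \<Rightarrow> real^'n)
    \<Rightarrow> ('m \<Rightarrow> (real^'n) set) \<Rightarrow> ('m \<Rightarrow> (real^'n) set) \<Rightarrow> ('m \<Rightarrow> real^'n^'n)
    \<Rightarrow> real \<Rightarrow> real \<Rightarrow> real \<Rightarrow> real \<Rightarrow> real \<Rightarrow> bool" where
  "anosov f Df X Ess Euu G c mum mup lam lap \<longleftrightarrow>
     flow_cocycle f Df X \<and>
     (\<forall>x. subspace (Ess x) \<and> subspace (Euu x) \<and>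
          dim (Ess x) + dim (Euu x) + 1 = CARD('n) \<and>
          span (Ess x \<union> Euu x \<union> {X x}) = UNIV) \<and>
     (\<forall>t x. (\<lambda>v. Df t x *v v) ` Ess x = Ess (f t x) \<and> (\<lambda>v. Df t x *v v) ` Euu x = Euu (f t x)) \<and>
     c > 0 \<and> 0 < mum \<and> mum \<le> mup \<and> mup < 1 \<and> 1 < lam \<and> lam \<le> lap \<and>
     (\<forall>x v t. v \<in> Ess x \<longrightarrow> t \<ge> 0 \<longrightarrow>
        (1/c) * mum powr t * nrm G x v \<le> nrm G (f t x) (Df t x *v v) \<and>
        nrm G (f t x) (Df t x *v v) \<le> c * mup powr t * nrm G x v) \<and>
     (\<forall>x w t. w \<in> Euu x \<longrightarrow> t \<ge> 0 \<longrightarrow>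
        (1/c) * lam powr t * nrm G x w \<le> nrm G (f t x) (Df t x *v w) \<and>
        nrm G (f t x) (Df t x *v w) \<le> c * lap powr t * nrm G x w)"

end

theory Submission imports Defs begin

text \<open>Let \<open>y = f\<^sub>-\<^sub>t x\<close>, \<open>u = Tf\<^sub>-\<^sub>t v\<close>, \<open>u' = Tf\<^sub>-\<^sub>t w\<close> and \<open>A = Tf\<^sub>t\<close> at \<open>y\<close>. Since the splitting is
 \<open>\<R>'\<close>-orthogonal, both wedge norms are products of \<open>\<R>'\<close>-lengths. Complete \<open>u/\<parallel>u\<parallel>'\<close>,
 \<open>u'/\<parallel>u'\<parallel>'\<close> and \<open>X(y)\<close> to an \<open>\<R>'\<close>-orthonormal basis of \<open>T\<^sub>yM\<close> adapted to the splitting. By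
 Hadamard's inequality the \<open>\<Omega>'\<close>-volume of the image under \<open>A\<close> of this basis, which is
 \<open>\<phi>(x)/\<phi>(y)\<close> because \<open>\<Omega>\<close> is preserved, is at most the product of the \<open>\<R>'\<close>-lengths of the
 images: \<open>1\<close> for \<open>X\<close>, \<open>\<parallel>v\<parallel>'/\<parallel>u\<parallel>'\<close> and \<open>\<parallel>w\<parallel>'/\<parallel>u'\<parallel>'\<close> for the two distinguished vectors, and at
 most \<open>bc\<mu>\<^sub>+\<^sup>t\<close> resp. \<open>bc\<lambda>\<^sub>+\<^sup>t\<close> for the remaining \<open>n - 3\<close> ones.\<close>

section \<open>Positive definite matrices and Hadamard's inequality\<close>

definition pos_def :: "real^'n^'n \<Rightarrow> bool" where
  "pos_def B \<longleftrightarrow> transpose B = B \<and> (\<forall>x. x \<noteq> 0 \<longrightarrow> x \<bullet> (B *v x) > 0)"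

lemma pos_def_symmetric: "pos_def B \<Longrightarrow> B$i$j = B$j$i"
  unfolding pos_def_def by (metis transpose_def vec_lambda_beta)

lemma matrix_vector_mult_axis: "(B::real^'n^'n) *v axis j 1 = column j B"
  by (simp add: vec_eq_iff matrix_vector_mult_def axis_def column_def if_distrib cong: if_cong)

lemma pos_def_diag_pos: "pos_def B \<Longrightarrow> B$i$i > 0"
proof -
  assume "pos_def B"
  then have "axis i 1 \<bullet> (B *v axis i (1::real)) > 0"
    unfolding pos_def_def by (simp add: axis_eq_0_iff)
  then show ?thesis
    by (simp add: matrix_vector_mult_axis column_def inner_axis inner_commute[of "axis i 1"])
qed

lemma inner_transpose_matrix: "(x::real^'n) \<bullet> (transpose E *v y) = (E *v x) \<bullet> y"
  by (metis dot_lmul_matrix inner_commute vector_transpose_matrix)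

lemma matrix_vector_mult_nonzero:
  fixes E :: "real^'n^'n"
  assumes "det E \<noteq> 0" "x \<noteq> 0"
  shows "E *v x \<noteq> 0"
proof
  assume Ex: "E *v x = 0"
  from assms(1) obtain F where "F ** E = mat 1"
    using invertible_det_nz invertible_left_inverse by blast
  then have "x = F *v (E *v x)" by (simp add: matrix_vector_mul_assoc)
  with Ex assms(2) show False by simp
qed

lemma pos_def_congruence:
  fixes E :: "real^'n^'n"
  assumes "pos_def B" "det E \<noteq> 0"
  shows "pos_def (E ** B ** transpose E)"
  unfolding pos_def_def
proof safe
  show "transpose (E ** B ** transpose E) = E ** B ** transpose E"
    using assms(1) unfolding pos_def_def by (simp add: matrix_transpose_mul matrix_mul_assoc)
next
  fix x :: "real^'n"
  assume "x \<noteq> 0"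
  then have "transpose E *v x \<noteq> 0"
    using matrix_vector_mult_nonzero[of "transpose E" x] assms(2) by simp
  then have "(transpose E *v x) \<bullet> (B *v (transpose E *v x)) > 0"
    using assms(1) unfolding pos_def_def by blast
  then show "x \<bullet> ((E ** B ** transpose E) *v x) > 0"
    by (metis inner_commute inner_transpose_matrix matrix_vector_mul_assoc)
qed

text \<open>Subtracting suitable multiples of row \<open>k\<close> from the other rows clears column \<open>k\<close> off the
 pivot \<open>B$k$k\<close>; conjugating by this matrix is one step of symmetric Gaussian elimination.\<close>

definition elim_matrix :: "real^'n^'n \<Rightarrow> 'n \<Rightarrow> real^'n^'n" where
  "elim_matrix B k =
     (\<chi> i j. (if i = j then 1 else 0) - (if j = k \<and> i \<noteq> k then B$i$k / B$k$k else 0))"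

lemma det_elim_matrix:
  fixes B :: "real^'n^'n"
  shows "det (elim_matrix B k) = 1"
proof -
  define y :: "real^'n" where "y = (\<chi> j. if j = k then 0 else - (B$j$k / B$k$k))"
  have y_as_sum: "y = (\<Sum>j\<in>UNIV - {k}. (y$j) *s axis j 1)"
  proof -
    have "(\<Sum>j\<in>UNIV - {k}. (y$j) *s axis j 1) $ i = (\<Sum>j\<in>UNIV - {k}. if j = i then y$j else 0)" for i
      by (simp add: sum_component axis_def if_distrib cong: if_cong)
    then show ?thesis by (simp add: vec_eq_iff sum.delta' y_def)
  qed
  have "y \<in> vec.span {row j (mat 1 :: real^'n^'n) |j. j \<noteq> k}"
    by (subst y_as_sum, intro vec.span_sum vec.span_scale vec.span_base)
      (auto simp: row_def mat_def axis_def vec_eq_iff)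
  moreover have "transpose (elim_matrix B k) =
      (\<chi> r. if r = k then row k (mat 1) + y else row r (mat 1))"
    by (auto simp: vec_eq_iff elim_matrix_def transpose_def row_def mat_def y_def)
  ultimately have "det (transpose (elim_matrix B k)) = det (mat 1 :: real^'n^'n)"
    using det_row_span[of y "mat 1" k] by simp
  then show ?thesis by simp
qed

lemma elim_matrix_mult_left:
  fixes B :: "real^'n^'n"
  shows "(elim_matrix B k ** B)$i$j = B$i$j - (if i \<noteq> k then B$i$k / B$k$k * B$k$j else 0)"
  by (simp add: matrix_matrix_mult_def elim_matrix_def left_diff_distrib sum_subtractf
      if_distrib[of "\<lambda>x. x * _"] sum.delta cong: if_cong)

lemma elim_matrix_mult_transpose_right:
  fixes B M :: "real^'n^'n"
  shows "(M ** transpose (elim_matrix B k))$i$j = M$i$j - (if j \<noteq> k then B$j$k / B$k$k * M$i$k else 0)"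
  by (simp add: matrix_matrix_mult_def transpose_def elim_matrix_def right_diff_distrib sum_subtractf
      if_distrib[of "\<lambda>x. _ * x"] sum.delta cong: if_cong)

lemma elim_matrix_congruence_entries:
  assumes "pos_def B"
  shows "(elim_matrix B k ** B ** transpose (elim_matrix B k))$i$j =
     (if i = k \<or> j = k then (if i = j then B$k$k else 0) else B$i$j - B$i$k * B$k$j / B$k$k)"
  using pos_def_diag_pos[OF assms, of k] pos_def_symmetric[OF assms, of j k]
    pos_def_symmetric[OF assms, of k j]
  by (auto simp: elim_matrix_mult_transpose_right elim_matrix_mult_left field_simps)

text \<open>Induction on the set \<open>U\<close> of rows that may still carry off-diagonal entries: eliminating
 one of them keeps the determinant and does not increase any diagonal entry.\<close>

lemma pos_def_det_bounds_partial:
  fixes B :: "real^'n^'n"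
  assumes "finite U" "pos_def B" "\<And>i j. i \<notin> U \<Longrightarrow> j \<noteq> i \<Longrightarrow> B$i$j = 0"
  shows "0 < det B \<and> det B \<le> (\<Prod>i\<in>UNIV. B$i$i)"
  using assms
proof (induction U arbitrary: B rule: finite_induct)
  case empty
  then have "det B = (\<Prod>i\<in>UNIV. B$i$i)" by (intro det_diagonal) auto
  moreover have "0 < (\<Prod>i\<in>UNIV. B$i$i)" using pos_def_diag_pos[OF empty(1)] by (simp add: prod_pos)
  ultimately show ?case by simp
next
  case (insert k U)
  define B' where "B' = elim_matrix B k ** B ** transpose (elim_matrix B k)"
  have pos': "pos_def B'"
    unfolding B'_def by (rule pos_def_congruence[OF insert(4)]) (simp add: det_elim_matrix)
  have entries: "B'$i$j = (if i = k \<or> j = k then (if i = j then B$k$k else 0)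
                           else B$i$j - B$i$k * B$k$j / B$k$k)" for i j
    unfolding B'_def by (rule elim_matrix_congruence_entries[OF insert(4)])
  have "B'$i$j = 0" if "i \<notin> U" "j \<noteq> i" for i j
    using that insert(5)[of i] by (cases "i = k") (auto simp: entries)
  then have IH: "0 < det B' \<and> det B' \<le> (\<Prod>i\<in>UNIV. B'$i$i)" using insert(3)[OF pos'] by blast
  have "det B' = det B" unfolding B'_def by (simp add: det_mul det_elim_matrix)
  moreover have "(\<Prod>i\<in>UNIV. B'$i$i) \<le> (\<Prod>i\<in>UNIV. B$i$i)"
  proof (rule prod_mono, rule conjI)
    fix i
    show "0 \<le> B'$i$i" using pos_def_diag_pos[OF pos'] less_imp_le by blast
    have "B$i$k * B$k$i / B$k$k \<ge> 0"
      using pos_def_diag_pos[OF insert(4), of k] pos_def_symmetric[OF insert(4), of k i] by simp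
    then show "B'$i$i \<le> B$i$i" by (auto simp: entries)
  qed
  ultimately show ?case using IH by linarith
qed

lemma pos_def_det_bounds:
  fixes B :: "real^'n^'n"
  assumes "pos_def B"
  shows "0 < det B \<and> det B \<le> (\<Prod>i\<in>UNIV. B$i$i)"
  by (rule pos_def_det_bounds_partial[of UNIV]) (use assms in auto)

definition form_inner :: "real^'n^'n \<Rightarrow> real^'n \<Rightarrow> real^'n \<Rightarrow> real" where
  "form_inner H u v = u \<bullet> (H *v v)"

definition form_norm :: "real^'n^'n \<Rightarrow> real^'n \<Rightarrow> real" where
  "form_norm H v = sqrt (form_inner H v v)"

definition form_orthonormal :: "real^'n^'n \<Rightarrow> (real^'n) set \<Rightarrow> bool" where
  "form_orthonormal H S \<longleftrightarrow>
     (\<forall>e\<in>S. form_inner H e e = 1) \<and> (\<forall>e\<in>S. \<forall>e'\<in>S. e \<noteq> e' \<longrightarrow> form_inner H e e' = 0)"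

lemma ip_eq_form_inner: "ip G x = form_inner (G x)"
  by (simp add: fun_eq_iff ip_def form_inner_def)

lemma nrm_eq_form_norm: "nrm G x = form_norm (G x)"
  by (simp add: fun_eq_iff nrm_def form_norm_def ip_eq_form_inner)

lemma riem_metric_pos_def: "riem_metric G \<Longrightarrow> pos_def (G x)"
  unfolding riem_metric_def pos_def_def ip_def by blast

lemma form_inner_commute: "pos_def H \<Longrightarrow> form_inner H u v = form_inner H v u"
  unfolding form_inner_def pos_def_def by (metis inner_commute inner_transpose_matrix)

lemma form_inner_zero_right [simp]: "form_inner H u 0 = 0"
  by (simp add: form_inner_def)

lemma form_inner_add_right: "form_inner H u (a + b) = form_inner H u a + form_inner H u b"
  by (simp add: form_inner_def matrix_vector_right_distrib inner_add_right)

lemma form_inner_scaleR_right: "form_inner H u (r *\<^sub>R a) = r * form_inner H u a"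
  by (simp add: form_inner_def matrix_vector_mult_scaleR)

lemma form_inner_scaleR_left: "form_inner H (r *\<^sub>R a) u = r * form_inner H a u"
  by (simp add: form_inner_def)

lemma form_inner_diff_right: "form_inner H u (a - b) = form_inner H u a - form_inner H u b"
  by (simp add: form_inner_def matrix_vector_mult_diff_distrib inner_diff_right)

lemma form_inner_sum_right:
  "form_inner H u (\<Sum>v\<in>S. c v *\<^sub>R v) = (\<Sum>v\<in>S. c v * form_inner H u v)"
  by (induction S rule: infinite_finite_induct)
    (simp_all add: form_inner_add_right form_inner_scaleR_right)

lemma form_inner_self_nonneg: "pos_def H \<Longrightarrow> form_inner H v v \<ge> 0"
  unfolding pos_def_def form_inner_def by (cases "v = 0") (auto intro: less_imp_le)

lemma form_inner_self_pos: "pos_def H \<Longrightarrow> v \<noteq> 0 \<Longrightarrow> form_inner H v v > 0"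
  unfolding pos_def_def form_inner_def by blast

lemma form_norm_nonneg: "pos_def H \<Longrightarrow> form_norm H v \<ge> 0"
  by (simp add: form_norm_def form_inner_self_nonneg)

lemma form_norm_pos: "pos_def H \<Longrightarrow> v \<noteq> 0 \<Longrightarrow> form_norm H v > 0"
  by (simp add: form_norm_def form_inner_self_pos)

lemma form_norm_power2: "pos_def H \<Longrightarrow> (form_norm H v)\<^sup>2 = form_inner H v v"
  using form_inner_self_nonneg[of H v] by (simp add: form_norm_def)

lemma form_norm_eq_1_iff: "pos_def H \<Longrightarrow> form_norm H v = 1 \<longleftrightarrow> form_inner H v v = 1"
  by (metis form_norm_power2 form_norm_def one_power2 real_sqrt_one)

lemma form_norm_scaleR: "form_norm H (r *\<^sub>R v) = \<bar>r\<bar> * form_norm H v"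
  by (simp add: form_norm_def form_inner_scaleR_left form_inner_scaleR_right real_sqrt_mult
      mult.assoc[symmetric])

lemma form_inner_normalize_self:
  assumes "pos_def H" "v \<noteq> 0"
  shows "form_inner H ((1 / form_norm H v) *\<^sub>R v) ((1 / form_norm H v) *\<^sub>R v) = 1"
proof -
  have "form_norm H ((1 / form_norm H v) *\<^sub>R v) = 1"
    using form_norm_pos[OF assms] by (simp add: form_norm_scaleR)
  then show ?thesis using form_norm_eq_1_iff[OF assms(1)] by blast
qed

lemma form_orthonormal_independent:
  assumes "finite S" "form_orthonormal H S"
  shows "independent S"
  unfolding independent_explicit
proof (intro conjI allI impI ballI)
  show "finite S" by fact
  fix c e
  assume sum0: "(\<Sum>v\<in>S. c v *\<^sub>R v) = 0" and e: "e \<in> S"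
  have "0 = form_inner H e (\<Sum>v\<in>S. c v *\<^sub>R v)" by (simp add: sum0)
  also have "\<dots> = (\<Sum>v\<in>S. if v = e then c v else 0)"
    unfolding form_inner_sum_right using assms(2) e
    by (intro sum.cong) (auto simp: form_orthonormal_def)
  also have "\<dots> = c e" using e assms(1) by (simp add: sum.delta')
  finally show "c e = 0" by simp
qed

lemma form_orthonormal_card_eq_dim:
  "finite S \<Longrightarrow> form_orthonormal H S \<Longrightarrow> card S = dim (span S)"
  by (metis dim_span dim_span_eq_card_independent form_orthonormal_independent)

lemma subspace_form_orthogonal: "subspace V \<Longrightarrow> subspace {q\<in>V. form_inner H u q = 0}"
  unfolding subspace_def by (simp add: form_inner_add_right form_inner_scaleR_right)

text \<open>One Gram--Schmidt step: a unit vector \<open>u \<in> V\<close> together with an orthonormal basis of its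
 orthogonal complement in \<open>V\<close> is an orthonormal basis of \<open>V\<close>, because
 \<open>q = (q - \<langle>u,q\<rangle> u) + \<langle>u,q\<rangle> u\<close>.\<close>

lemma form_orthonormal_basis_insert:
  assumes H: "pos_def H" and V: "subspace V" and u: "u \<in> V" "form_inner H u u = 1"
    and S: "S \<subseteq> {q\<in>V. form_inner H u q = 0}" "span S = {q\<in>V. form_inner H u q = 0}"
      "form_orthonormal H S"
  shows "insert u S \<subseteq> V \<and> span (insert u S) = V \<and> form_orthonormal H (insert u S)"
proof (intro conjI)
  show sub: "insert u S \<subseteq> V" using S u by auto
  show "span (insert u S) = V"
  proof
    show "span (insert u S) \<subseteq> V" using span_minimal[OF sub V] .
    show "V \<subseteq> span (insert u S)"
    proof
      fix q
      assume q: "q \<in> V"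
      have "q - form_inner H u q *\<^sub>R u \<in> span S"
        using q u V S(2) by (simp add: form_inner_diff_right form_inner_scaleR_right
            subspace_diff subspace_scale)
      then have "(q - form_inner H u q *\<^sub>R u) + form_inner H u q *\<^sub>R u \<in> span (insert u S)"
        by (intro span_add span_scale) (auto intro: span_base span_mono[THEN subsetD])
      then show "q \<in> span (insert u S)" by simp
    qed
  qed
  show "form_orthonormal H (insert u S)"
    using S(1,3) u(2) form_inner_commute[OF H] unfolding form_orthonormal_def by auto
qed

lemma form_orthonormal_basis_exists:
  assumes H: "pos_def H"
  shows "subspace V \<Longrightarrow> \<exists>S. finite S \<and> S \<subseteq> V \<and> span S = V \<and> form_orthonormal H S"
proof (induction "dim V" arbitrary: V rule: less_induct)
  case less
  show ?case
  proof (cases "V \<subseteq> {0}")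
    case True
    then have "V = {0}" using less(2) subspace_0 by blast
    then show ?thesis by (intro exI[of _ "{}"]) (auto simp: form_orthonormal_def)
  next
    case False
    then obtain p where p: "p \<in> V" "p \<noteq> 0" by blast
    define u where "u = (1 / form_norm H p) *\<^sub>R p"
    have uV: "u \<in> V" unfolding u_def using p less(2) by (simp add: subspace_scale)
    have uu: "form_inner H u u = 1"
      unfolding u_def using H p(2) by (rule form_inner_normalize_self)
    define W where "W = {q\<in>V. form_inner H u q = 0}"
    have W: "subspace W" unfolding W_def using less(2) by (rule subspace_form_orthogonal)
    have "u \<notin> W" using uu unfolding W_def by simp
    then have "W \<subset> V" using uV unfolding W_def by blast
    moreover have "span W = W" "span V = V" by (simp_all add: span_eq_iff W less(2))
    ultimately have "dim W < dim V" using dim_psubset[of W V] by metis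
    then obtain S where "finite S" "S \<subseteq> W" "span S = W" "form_orthonormal H S"
      using less(1) W by blast
    then show ?thesis
      using form_orthonormal_basis_insert[OF H less(2) uV uu, of S] unfolding W_def by blast
  qed
qed

lemma form_orthonormal_basis_extend:
  assumes H: "pos_def H" and V: "subspace V" and u: "u \<in> V" "form_inner H u u = 1"
  obtains S where "finite S" "S \<subseteq> V" "span S = V" "form_orthonormal H S" "u \<in> S"
proof -
  have W: "subspace {q\<in>V. form_inner H u q = 0}"
    using V by (rule subspace_form_orthogonal)
  obtain S where "finite S" "S \<subseteq> {q\<in>V. form_inner H u q = 0}"
    "span S = {q\<in>V. form_inner H u q = 0}" "form_orthonormal H S"
    using form_orthonormal_basis_exists[OF H W] by blast
  with form_orthonormal_basis_insert[OF H V u, of S] show ?thesis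
    by (intro that[of "insert u S"]) auto
qed

section \<open>Volume distortion along an orthonormal basis\<close>

lemma column_matrix_mult: "column j ((A::real^'n^'n) ** M) = A *v column j M"
  by (simp add: vec_eq_iff column_def matrix_matrix_mult_def matrix_vector_mult_def)

lemma gram_matrix_entry:
  fixes M H :: "real^'n^'n"
  shows "(transpose M ** H ** M)$i$j = form_inner H (column i M) (column j M)"
proof -
  have "(transpose M ** H ** M)$i$j = (transpose M ** (H ** M))$i$j"
    by (simp add: matrix_mul_assoc)
  also have "\<dots> = (\<Sum>l\<in>UNIV. M$l$i * (H ** M)$l$j)"
    by (simp add: matrix_matrix_mult_def transpose_def)
  also have "\<dots> = column i M \<bullet> column j (H ** M)"
    by (simp add: inner_vec_def column_def)
  finally show ?thesis by (simp add: column_matrix_mult form_inner_def)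
qed

text \<open>The left side is the \<open>K\<close>-volume of the image under \<open>A\<close> of an \<open>H\<close>-orthonormal basis;
 Hadamard's inequality for its Gram matrix bounds it by the product of the \<open>K\<close>-lengths.\<close>

lemma volume_le_prod_form_norm:
  fixes A H K :: "real^'n^'n"
  assumes H: "pos_def H" and K: "pos_def K"
    and T: "finite T" "form_orthonormal H T" "card T = CARD('n)"
  shows "\<bar>det A\<bar> * sqrt (det K) \<le> sqrt (det H) * (\<Prod>e\<in>T. form_norm K (A *v e))"
proof (cases "det A = 0")
  case True
  then show ?thesis
    using pos_def_det_bounds[OF H] by (simp add: prod_nonneg form_norm_nonneg[OF K])
next
  case False
  obtain g where g: "bij_betw g (UNIV::'n set) T"
    using finite_same_card_bij[OF finite T(1)] T(3) by auto
  define M :: "real^'n^'n" where "M = (\<chi> i j. g j $ i)"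
  have column_M: "column j M = g j" for j by (simp add: M_def column_def vec_eq_iff)
  have "(transpose M ** H ** M)$i$j = mat 1 $i$j" for i j
    using T(2) g unfolding gram_matrix_entry column_M form_orthonormal_def mat_def
    by (cases "i = j") (auto simp: bij_betw_def inj_eq)
  then have "transpose M ** H ** M = mat 1" by (simp add: vec_eq_iff)
  then have "det (transpose M ** H ** M) = 1" by simp
  then have det_M: "det M ^ 2 * det H = 1" by (simp add: det_mul power2_eq_square mult_ac)
  define B where "B = transpose (A ** M) ** K ** (A ** M)"
  have "det (A ** M) \<noteq> 0" using False det_M by (auto simp: det_mul)
  then have "pos_def B"
    using pos_def_congruence[OF K, of "transpose (A ** M)"] by (simp add: B_def)
  then have "det B \<le> (\<Prod>i\<in>UNIV. B$i$i)" using pos_def_det_bounds by blast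
  also have "\<dots> = (\<Prod>i\<in>UNIV. (form_norm K (A *v g i))\<^sup>2)"
    unfolding B_def gram_matrix_entry column_matrix_mult column_M form_norm_power2[OF K] ..
  also have "\<dots> = (\<Prod>e\<in>T. form_norm K (A *v e))\<^sup>2"
    using prod.reindex_bij_betw[OF g, of "\<lambda>e. (form_norm K (A *v e))\<^sup>2"]
    by (simp add: prod_power_distrib)
  finally have "det B * det H \<le> (\<Prod>e\<in>T. form_norm K (A *v e))\<^sup>2 * det H"
    using pos_def_det_bounds[OF H] by (simp add: mult_right_mono)
  moreover have "det B * det H = det A ^ 2 * det K"
    using det_M by (simp add: B_def det_mul power2_eq_square)
  ultimately have "sqrt (det A ^ 2 * det K) \<le> sqrt (det H * (\<Prod>e\<in>T. form_norm K (A *v e))\<^sup>2)"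
    by (simp add: mult.commute)
  then show ?thesis
    by (simp add: real_sqrt_mult prod_nonneg form_norm_nonneg[OF K])
qed

lemma form_orthonormal_basis_adapted:
  assumes H: "pos_def H" and Es: "subspace Es" and Eu: "subspace Eu"
    and dims: "dim Es + dim Eu + 1 = CARD('n)"
    and X0: "form_inner H X0 X0 = 1" "\<And>e. e \<in> Es \<Longrightarrow> form_inner H e X0 = 0"
      "\<And>e. e \<in> Eu \<Longrightarrow> form_inner H e X0 = 0"
    and orth: "\<And>a b. a \<in> Es \<Longrightarrow> b \<in> Eu \<Longrightarrow> form_inner H a b = 0"
    and e1: "e1 \<in> Es" "form_inner H e1 e1 = 1" and e2: "e2 \<in> Eu" "form_inner H e2 e2 = 1"
  obtains S1 S2 :: "(real^'n) set"
  where "finite S1" "S1 \<subseteq> Es" "e1 \<in> S1" "card S1 = dim Es"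
    "finite S2" "S2 \<subseteq> Eu" "e2 \<in> S2" "card S2 = dim Eu"
    "X0 \<notin> S1 \<union> S2" "S1 \<inter> S2 = {}"
    "form_orthonormal H (insert X0 (S1 \<union> S2))" "card (insert X0 (S1 \<union> S2)) = CARD('n)"
proof -
  obtain S1 where S1: "finite S1" "S1 \<subseteq> Es" "span S1 = Es" "form_orthonormal H S1" "e1 \<in> S1"
    using form_orthonormal_basis_extend[OF H Es e1] .
  obtain S2 where S2: "finite S2" "S2 \<subseteq> Eu" "span S2 = Eu" "form_orthonormal H S2" "e2 \<in> S2"
    using form_orthonormal_basis_extend[OF H Eu e2] .
  have card: "card S1 = dim Es" "card S2 = dim Eu"
    using form_orthonormal_card_eq_dim S1 S2 by metis+
  have unit: "form_inner H e e = 1" if "e \<in> S1 \<union> S2" for e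
    using that S1(4) S2(4) unfolding form_orthonormal_def by blast
  have disj: "S1 \<inter> S2 = {}" using orth unit S1(2) S2(2) by fastforce
  have X0_notin: "X0 \<notin> S1 \<union> S2" using X0 unit S1(2) S2(2) by fastforce
  have "form_inner H b a = 0" if "a \<in> Es" "b \<in> Eu" for a b
    using that orth form_inner_commute[OF H] by metis
  moreover have "form_inner H X0 e = 0" if "e \<in> Es \<union> Eu" for e
    using that X0 form_inner_commute[OF H] by (metis Un_iff)
  ultimately have "form_orthonormal H (insert X0 (S1 \<union> S2))"
    using S1(2,4) S2(2,4) X0 orth unfolding form_orthonormal_def by (auto 0 4)
  moreover have "card (insert X0 (S1 \<union> S2)) = CARD('n)"
    using S1(1) S2(1) disj X0_notin card dims by (simp add: card_Un_disjoint)
  ultimately show ?thesis using that S1 S2 card disj X0_notin by blast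
qed

lemma prod_le_mult_power_card:
  fixes g :: "'a \<Rightarrow> real"
  assumes "finite S" "a \<in> S" "\<And>e. e \<in> S \<Longrightarrow> 0 \<le> g e" "\<And>e. e \<in> S - {a} \<Longrightarrow> g e \<le> k"
  shows "prod g S \<le> g a * k ^ (card S - 1)"
proof -
  have "prod g S = g a * prod g (S - {a})" using assms(1,2) by (simp add: prod.remove)
  also have "\<dots> \<le> g a * (\<Prod>e\<in>S - {a}. k)"
    using assms(2-4) by (intro mult_left_mono prod_mono) auto
  also have "\<dots> = g a * k ^ (card S - 1)" using assms(1,2) by simp
  finally show ?thesis .
qed

lemma volume_mult_norms_le_splitting:
  fixes A H K :: "real^'n^'n"
  assumes H: "pos_def H" and K: "pos_def K" and Es: "subspace Es" and Eu: "subspace Eu"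
    and dims: "dim Es + dim Eu + 1 = CARD('n)"
    and X0: "form_inner H X0 X0 = 1" "\<And>e. e \<in> Es \<Longrightarrow> form_inner H e X0 = 0"
      "\<And>e. e \<in> Eu \<Longrightarrow> form_inner H e X0 = 0"
    and orth: "\<And>a b. a \<in> Es \<Longrightarrow> b \<in> Eu \<Longrightarrow> form_inner H a b = 0"
    and AX0: "form_norm K (A *v X0) = 1"
    and stable: "\<And>e. e \<in> Es \<Longrightarrow> form_norm K (A *v e) \<le> ks * form_norm H e"
    and unstable: "\<And>e. e \<in> Eu \<Longrightarrow> form_norm K (A *v e) \<le> ku * form_norm H e"
    and u: "u \<in> Es" "u \<noteq> 0" and u': "u' \<in> Eu" "u' \<noteq> 0"
  shows "\<bar>det A\<bar> * sqrt (det K) * (form_norm H u * form_norm H u')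
    \<le> sqrt (det H) * (ks ^ (dim Es - 1) * ku ^ (dim Eu - 1))
      * (form_norm K (A *v u) * form_norm K (A *v u'))"
proof -
  define N where "N e = form_norm K (A *v e)" for e
  define a a' where "a = form_norm H u" and "a' = form_norm H u'"
  have a_pos: "a > 0" "a' > 0" using form_norm_pos[OF H] u u' by (simp_all add: a_def a'_def)
  define e1 e2 where "e1 = (1 / a) *\<^sub>R u" and "e2 = (1 / a') *\<^sub>R u'"
  have unit: "form_inner H e1 e1 = 1" "form_inner H e2 e2 = 1"
    using form_inner_normalize_self[OF H] u u' by (simp_all add: e1_def e2_def a_def a'_def)
  have N_e: "N e1 = N u / a" "N e2 = N u' / a'"
    using a_pos by (simp_all add: N_def e1_def e2_def matrix_vector_mult_scaleR form_norm_scaleR)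
  obtain S1 S2 where S1: "finite S1" "S1 \<subseteq> Es" "e1 \<in> S1" "card S1 = dim Es"
    and S2: "finite S2" "S2 \<subseteq> Eu" "e2 \<in> S2" "card S2 = dim Eu"
    and X0_notin: "X0 \<notin> S1 \<union> S2" and disj: "S1 \<inter> S2 = {}"
    and T: "form_orthonormal H (insert X0 (S1 \<union> S2))" "card (insert X0 (S1 \<union> S2)) = CARD('n)"
    using form_orthonormal_basis_adapted[OF H Es Eu dims X0 orth _ unit(1) _ unit(2)]
      Es Eu u u' by (auto simp: e1_def e2_def subspace_scale)
  have unit_norm: "form_norm H e = 1" if "e \<in> S1 \<union> S2" for e
    using T that form_norm_eq_1_iff[OF H] unfolding form_orthonormal_def by blast
  have N_nonneg: "0 \<le> N e" for e by (simp add: N_def form_norm_nonneg[OF K])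
  have P1: "prod N S1 \<le> N u / a * ks ^ (dim Es - 1)"
  proof -
    have "N e \<le> ks" if "e \<in> S1 - {e1}" for e
      using stable[of e] unit_norm[of e] that S1(2) by (auto simp: N_def)
    then show ?thesis
      using prod_le_mult_power_card[of S1 e1 N ks] S1(1,3,4) N_nonneg by (simp add: N_e)
  qed
  have P2: "prod N S2 \<le> N u' / a' * ku ^ (dim Eu - 1)"
  proof -
    have "N e \<le> ku" if "e \<in> S2 - {e2}" for e
      using unstable[of e] unit_norm[of e] that S2(2) by (auto simp: N_def)
    then show ?thesis
      using prod_le_mult_power_card[of S2 e2 N ku] S2(1,3,4) N_nonneg by (simp add: N_e)
  qed
  have "\<bar>det A\<bar> * sqrt (det K) \<le> sqrt (det H) * prod N (insert X0 (S1 \<union> S2))"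
    using volume_le_prod_form_norm[OF H K _ T] S1(1) S2(1) by (simp add: N_def)
  also have "prod N (insert X0 (S1 \<union> S2)) = prod N S1 * prod N S2"
    using S1(1) S2(1) X0_notin disj AX0 by (simp add: N_def prod.union_disjoint)
  also have "\<dots> \<le> (N u / a * ks ^ (dim Es - 1)) * (N u' / a' * ku ^ (dim Eu - 1))"
    using P1 P2 prod_nonneg[of S1 N] prod_nonneg[of S2 N] N_nonneg
    by (intro mult_mono) (auto intro: order_trans)
  finally have "\<bar>det A\<bar> * sqrt (det K) \<le>
      sqrt (det H) * (ks ^ (dim Es - 1) * ku ^ (dim Eu - 1)) * (N u * N u') / (a * a')"
    using pos_def_det_bounds[OF H] by (simp add: mult_left_mono field_simps)
  then show ?thesis using a_pos by (simp add: field_simps N_def a_def a'_def)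
qed

section \<open>Backward area growth under an Anosov flow\<close>

lemma flow_cocycle_inverse:
  assumes "flow_cocycle f Df X"
  shows "f t (f (-t) x) = x" "Df t (f (-t) x) ** Df (-t) x = mat 1"
  using assms unfolding flow_cocycle_def by (metis add.right_inverse)+

lemma wedge_norm_orthogonal: "ip G x v w = 0 \<Longrightarrow> wedge_norm G x v w = nrm G x v * nrm G x w"
  by (simp add: wedge_norm_def nrm_def real_sqrt_mult)

lemma nrm_bound_equivalent_metric:
  assumes "nrm G y' v' \<le> k * nrm G y v" "0 \<le> k"
    and "\<And>z v. bm * nrm G z v \<le> nrm G' z v \<and> nrm G' z v \<le> bp * nrm G z v"
    and "0 < bm" "0 \<le> bp"
  shows "nrm G' y' v' \<le> (bp / bm) * k * nrm G' y v"
proof -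
  have "nrm G' y' v' \<le> bp * (k * nrm G y v)"
    using assms(3)[of y' v'] assms(1,5) by (meson mult_left_mono order_trans)
  also have "\<dots> \<le> bp * (k * (nrm G' y v / bm))"
    using assms(3)[of y v] assms(2,4,5) by (intro mult_left_mono) (auto simp: field_simps)
  finally show ?thesis by (simp add: field_simps)
qed

lemma abs_det_volume_change:
  assumes "riem_metric G" "preserves_volume f Df G"
    and "\<And>x. sqrt (det (G' x)) = \<phi> x * sqrt (det (G x))" "\<And>x. \<phi> x > 0"
  shows "\<bar>det (Df t y)\<bar> * sqrt (det (G' (f t y))) = \<phi> (f t y) / \<phi> y * sqrt (det (G' y))"
proof -
  have vol: "sqrt (det (G (f t y))) * det (Df t y) = sqrt (det (G y))"
    using assms(2) unfolding preserves_volume_def by blast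
  have "det (G z) > 0" for z
    using pos_def_det_bounds[OF riem_metric_pos_def[OF assms(1)]] by blast
  then have "det (Df t y) > 0"
    using vol by (metis real_sqrt_gt_0_iff zero_less_mult_pos)
  then have "\<bar>det (Df t y)\<bar> * sqrt (det (G' (f t y)))
      = \<phi> (f t y) * (sqrt (det (G (f t y))) * det (Df t y))"
    by (simp add: assms(3))
  also have "\<dots> = \<phi> (f t y) / \<phi> y * sqrt (det (G' y))"
    using assms(4)[of y] by (simp add: vol assms(3))
  finally show ?thesis .
qed

lemma ratio_le_SUP_div_INF:
  fixes \<phi> :: "'m::topological_space \<Rightarrow> real"
  assumes "compact (UNIV :: 'm set)" "continuous_on UNIV \<phi>" "\<And>x. \<phi> x > 0"
  shows "\<phi> y / \<phi> x \<le> (SUP z. \<phi> z) / (INF z. \<phi> z)"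
proof -
  obtain xmin xmax where min: "\<And>z. \<phi> xmin \<le> \<phi> z" and max: "\<And>z. \<phi> z \<le> \<phi> xmax"
    using continuous_attains_inf[OF assms(1) UNIV_not_empty assms(2)]
      continuous_attains_sup[OF assms(1) UNIV_not_empty assms(2)] by blast
  have "(INF z. \<phi> z) \<le> \<phi> x"
    by (rule cINF_lower[OF bdd_belowI[of _ "\<phi> xmin"]]) (auto simp: min)
  moreover have "\<phi> y \<le> (SUP z. \<phi> z)"
    by (rule cSUP_upper[OF _ bdd_aboveI[of _ "\<phi> xmax"]]) (auto simp: max)
  moreover have "\<phi> xmin \<le> (INF z. \<phi> z)" by (rule cINF_greatest) (auto simp: min)
  ultimately show ?thesis
    using assms(3) by (meson frac_le less_le_trans less_imp_le)
qed

lemma mult_powr_power_split: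
  fixes b m l t :: real
  assumes "0 < m" "0 < l"
  shows "(b * m powr t) ^ p * (b * l powr t) ^ q = b ^ (p + q) * (m ^ p * l ^ q) powr t"
proof -
  have power_powr: "(z powr t) ^ n = (z ^ n) powr t" if "0 < z" for z :: real and n
    using that by (simp add: powr_realpow[symmetric] powr_powr powr_power mult.commute)
  show ?thesis
    using assms by (simp add: power_mult_distrib power_add powr_mult power_powr)
qed

lemma anosov_norm_bounds_equivalent_metric:
  assumes anos: "anosov f Df X Ess Euu G c mum mup lam lap"
    and b_pos: "bm > 0" "bp > 0"
    and b_bounds: "\<And>x v. bm * nrm G x v \<le> nrm G' x v \<and> nrm G' x v \<le> bp * nrm G x v"
    and t: "t \<ge> 0"
  shows "v \<in> Ess y \<Longrightarrow> nrm G' (f t y) (Df t y *v v) \<le> (bp / bm) * c * mup powr t * nrm G' y v"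
    and "w \<in> Euu y \<Longrightarrow> nrm G' (f t y) (Df t y *v w) \<le> (bp / bm) * c * lap powr t * nrm G' y w"
proof -
  note anosov = anos[unfolded anosov_def]
  note transfer = nrm_bound_equivalent_metric[OF _ _ b_bounds b_pos(1) less_imp_le[OF b_pos(2)]]
  show "nrm G' (f t y) (Df t y *v v) \<le> (bp / bm) * c * mup powr t * nrm G' y v"
    if "v \<in> Ess y"
  proof -
    have "nrm G (f t y) (Df t y *v v) \<le> (c * mup powr t) * nrm G y v"
      using anosov t that by (simp add: mult.assoc)
    from transfer[OF this] show ?thesis using anosov by (simp add: mult.assoc)
  qed
  show "nrm G' (f t y) (Df t y *v w) \<le> (bp / bm) * c * lap powr t * nrm G' y w"
    if "w \<in> Euu y"
  proof -
    have "nrm G (f t y) (Df t y *v w) \<le> (c * lap powr t) * nrm G y w"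
      using anosov t that by (simp add: mult.assoc)
    from transfer[OF this] show ?thesis using anosov by (simp add: mult.assoc)
  qed
qed

lemma anosov_forward_norm_product_bound:
  fixes f :: "real \<Rightarrow> 'm \<Rightarrow> 'm" and Df :: "real \<Rightarrow> 'm \<Rightarrow> real^'n^'n"
  assumes metric: "riem_metric G"
    and anos: "anosov f Df X Ess Euu G c mum mup lam lap"
    and vol: "preserves_volume f Df G"
    and dims: "\<And>x. dim (Ess x) = ns" "\<And>x. dim (Euu x) = nu"
    and metric': "riem_metric G'"
    and X_unit: "\<And>x. nrm G' x (X x) = 1"
    and orth: "\<And>x v w. v \<in> Ess x \<Longrightarrow> w \<in> Euu x \<Longrightarrow> ip G' x v w = 0"
              "\<And>x v. v \<in> Ess x \<Longrightarrow> ip G' x v (X x) = 0"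
              "\<And>x w. w \<in> Euu x \<Longrightarrow> ip G' x w (X x) = 0"
    and phi_pos: "\<And>x. \<phi> x > 0"
    and phi_def: "\<And>x. sqrt (det (G' x)) = \<phi> x * sqrt (det (G x))"
    and b_pos: "bm > 0" "bp > 0"
    and b_bounds: "\<And>x v. bm * nrm G x v \<le> nrm G' x v \<and> nrm G' x v \<le> bp * nrm G x v"
    and u: "u \<in> Ess y" "u \<noteq> 0" and u': "u' \<in> Euu y" "u' \<noteq> 0" and t: "t \<ge> 0"
  shows "\<phi> (f t y) / \<phi> y * (nrm G' y u * nrm G' y u')
    \<le> ((bp / bm) * c) ^ (CARD('n) - 3) * (mup ^ (ns - 1) * lap ^ (nu - 1)) powr t
      * (nrm G' (f t y) (Df t y *v u) * nrm G' (f t y) (Df t y *v u'))"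
proof -
  note anosov = anos[unfolded anosov_def]
  define x A where "x = f t y" and "A = Df t y"
  define ks ku where "ks = (bp / bm) * c * mup powr t" and "ku = (bp / bm) * c * lap powr t"
  have H: "pos_def (G' y)" and K: "pos_def (G' x)" using riem_metric_pos_def[OF metric'] by auto
  have "form_norm (G' x) (A *v e) \<le> ks * form_norm (G' y) e" if "e \<in> Ess y" for e
    using anosov_norm_bounds_equivalent_metric(1)[OF anos b_pos b_bounds t that]
    unfolding ks_def A_def x_def nrm_eq_form_norm .
  moreover have "form_norm (G' x) (A *v e) \<le> ku * form_norm (G' y) e" if "e \<in> Euu y" for e
    using anosov_norm_bounds_equivalent_metric(2)[OF anos b_pos b_bounds t that]
    unfolding ku_def A_def x_def nrm_eq_form_norm .
  moreover have "form_norm (G' x) (A *v X y) = 1"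
    using anosov X_unit unfolding A_def x_def flow_cocycle_def nrm_eq_form_norm by metis
  moreover have "form_inner (G' y) (X y) (X y) = 1"
    using X_unit form_norm_eq_1_iff[OF H] nrm_eq_form_norm by metis
  ultimately have core: "\<bar>det A\<bar> * sqrt (det (G' x)) * (form_norm (G' y) u * form_norm (G' y) u')
      \<le> sqrt (det (G' y)) * (ks ^ (ns - 1) * ku ^ (nu - 1))
        * (form_norm (G' x) (A *v u) * form_norm (G' x) (A *v u'))"
    using volume_mult_norms_le_splitting[OF H K, of "Ess y" "Euu y" "X y" A ks ku u u'] anosov
      orth u u' dims unfolding ip_eq_form_inner by auto
  have volume: "\<bar>det A\<bar> * sqrt (det (G' x)) = \<phi> x / \<phi> y * sqrt (det (G' y))"
    using abs_det_volume_change[OF metric vol phi_def phi_pos] unfolding A_def x_def .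
  have exponents: "ks ^ (ns - 1) * ku ^ (nu - 1) =
      ((bp / bm) * c) ^ (CARD('n) - 3) * (mup ^ (ns - 1) * lap ^ (nu - 1)) powr t"
  proof -
    have "\<not> Ess y \<subseteq> {0}" "\<not> Euu y \<subseteq> {0}" using u u' by auto
    then have "ns \<ge> 1" "nu \<ge> 1" using dims dim_eq_0 by (metis less_one not_le)+
    moreover have "ns + nu + 1 = CARD('n)" using anosov dims by metis
    ultimately have n: "CARD('n) - 3 = (ns - 1) + (nu - 1)" by linarith
    have "0 < mup" "0 < lap" using anosov by auto
    then show ?thesis unfolding ks_def ku_def n by (rule mult_powr_power_split)
  qed
  have "sqrt (det (G' y)) * (\<phi> x / \<phi> y * (form_norm (G' y) u * form_norm (G' y) u'))
      \<le> sqrt (det (G' y)) * (((bp / bm) * c) ^ (CARD('n) - 3) * (mup ^ (ns - 1) * lap ^ (nu - 1)) powr t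
        * (form_norm (G' x) (A *v u) * form_norm (G' x) (A *v u')))"
    using core unfolding volume exponents by (simp only: ac_simps)
  then show ?thesis
    using pos_def_det_bounds[OF H] unfolding x_def A_def nrm_eq_form_norm
    by (meson mult_left_le_imp_le real_sqrt_gt_zero)
qed

lemma anosov_backward_area_bound:
  fixes f :: "real \<Rightarrow> 'm \<Rightarrow> 'm" and Df :: "real \<Rightarrow> 'm \<Rightarrow> real^'n^'n"
  assumes metric: "riem_metric G"
    and anos: "anosov f Df X Ess Euu G c mum mup lam lap"
    and vol: "preserves_volume f Df G"
    and dims: "\<And>x. dim (Ess x) = ns" "\<And>x. dim (Euu x) = nu"
    and metric': "riem_metric G'"
    and X_unit: "\<And>x. nrm G' x (X x) = 1"
    and orth: "\<And>x v w. v \<in> Ess x \<Longrightarrow> w \<in> Euu x \<Longrightarrow> ip G' x v w = 0"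
              "\<And>x v. v \<in> Ess x \<Longrightarrow> ip G' x v (X x) = 0"
              "\<And>x w. w \<in> Euu x \<Longrightarrow> ip G' x w (X x) = 0"
    and phi_pos: "\<And>x. \<phi> x > 0"
    and phi_def: "\<And>x. sqrt (det (G' x)) = \<phi> x * sqrt (det (G x))"
    and b_pos: "bm > 0" "bp > 0"
    and b_bounds: "\<And>x v. bm * nrm G x v \<le> nrm G' x v \<and> nrm G' x v \<le> bp * nrm G x v"
    and x_v_w: "v \<in> Ess x" "w \<in> Euu x" "t \<ge> 0"
  shows "wedge_norm G' (f (-t) x) (Df (-t) x *v v) (Df (-t) x *v w)
    \<le> \<phi> (f (-t) x) / \<phi> x * (((bp / bm) * c) ^ (CARD('n) - 3)
         * (mup ^ (ns - 1) * lap ^ (nu - 1)) powr t * wedge_norm G' x v w)"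
proof -
  note anosov = anos[unfolded anosov_def]
  define y u u' where "y = f (-t) x" and "u = Df (-t) x *v v" and "u' = Df (-t) x *v w"
  have fy: "f t y = x" and Au: "Df t y *v u = v" "Df t y *v u' = w"
    using flow_cocycle_inverse[of f Df X t x] anosov
    by (simp_all add: y_def u_def u'_def matrix_vector_mul_assoc)
  have u: "u \<in> Ess y" "u' \<in> Euu y"
    using anosov x_v_w unfolding y_def u_def u'_def by blast+
  have lhs: "wedge_norm G' (f (-t) x) (Df (-t) x *v v) (Df (-t) x *v w) = nrm G' y u * nrm G' y u'"
    using wedge_norm_orthogonal[OF orth(1)[OF u]] by (simp add: y_def u_def u'_def)
  have rhs: "wedge_norm G' x v w = nrm G' x v * nrm G' x w"
    using wedge_norm_orthogonal[OF orth(1)[OF x_v_w(1,2)]] .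
  show ?thesis
  proof (cases "u = 0 \<or> u' = 0")
    case True
    moreover from True have "v = 0 \<or> w = 0" using Au by auto
    ultimately show ?thesis unfolding lhs rhs by (auto simp: nrm_def ip_def)
  next
    case False
    let ?P = "nrm G' y u * nrm G' y u'" and ?Q = "((bp / bm) * c) ^ (CARD('n) - 3)
      * (mup ^ (ns - 1) * lap ^ (nu - 1)) powr t * (nrm G' x v * nrm G' x w)"
    have "\<phi> x / \<phi> y * ?P \<le> ?Q"
      using anosov_forward_norm_product_bound[OF metric anos vol dims metric' X_unit orth phi_pos
          phi_def b_pos b_bounds u(1) _ u(2) _ x_v_w(3)] False
      unfolding fy Au by blast
    have "?P = \<phi> y / \<phi> x * (\<phi> x / \<phi> y * ?P)"
      using phi_pos[of x] phi_pos[of y] by simp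
    also have "\<dots> \<le> \<phi> y / \<phi> x * ?Q"
      by (rule mult_left_mono[OF \<open>\<phi> x / \<phi> y * ?P \<le> ?Q\<close>])
        (use phi_pos[of x] phi_pos[of y] in simp)
    finally show ?thesis unfolding lhs rhs y_def .
  qed
qed

theorem lemma2p5:
  fixes f :: "real \<Rightarrow> 'm::topological_space \<Rightarrow> 'm"
    and Df :: "real \<Rightarrow> 'm \<Rightarrow> real^'n^'n"
    and X :: "'m \<Rightarrow> real^'n"
    and Ess Euu :: "'m \<Rightarrow> (real^'n) set"
    and G G' :: "'m \<Rightarrow> real^'n^'n"
    and \<phi> :: "'m \<Rightarrow> real"
    and c mum mup lam lap bm bp :: real
    and ns nu :: nat
  assumes compact: "compact (UNIV :: 'm set)"
    and metric: "riem_metric G"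
    and anos: "anosov f Df X Ess Euu G c mum mup lam lap"
    and vol: "preserves_volume f Df G"
    and dims: "\<And>x. dim (Ess x) = ns" "\<And>x. dim (Euu x) = nu"
    and metric': "riem_metric G'"
    and X_unit: "\<And>x. nrm G' x (X x) = 1"
    and orth: "\<And>x v w. v \<in> Ess x \<Longrightarrow> w \<in> Euu x \<Longrightarrow> ip G' x v w = 0"
              "\<And>x v. v \<in> Ess x \<Longrightarrow> ip G' x v (X x) = 0"
              "\<And>x w. w \<in> Euu x \<Longrightarrow> ip G' x w (X x) = 0"
    and phi_cont: "continuous_on UNIV \<phi>"
    and phi_pos: "\<And>x. \<phi> x > 0"
    and phi_def: "\<And>x. sqrt (det (G' x)) = \<phi> x * sqrt (det (G x))"
    and b_pos: "bm > 0" "bp > 0"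
    and b_bounds: "\<And>x v. bm * nrm G x v \<le> nrm G' x v \<and> nrm G' x v \<le> bp * nrm G x v"
    and x_v_w: "v \<in> Ess x" "w \<in> Euu x" "t \<ge> 0"
  shows "wedge_norm G' (f (-t) x) (Df (-t) x *v v) (Df (-t) x *v w)
         \<le> ((SUP y. \<phi> y) / (INF y. \<phi> y)) * ((bp / bm) * c) ^ (CARD('n) - 3)
           * (mup ^ (ns - 1) * lap ^ (nu - 1)) powr t * wedge_norm G' x v w"
proof -
  let ?R = "((bp / bm) * c) ^ (CARD('n) - 3) * (mup ^ (ns - 1) * lap ^ (nu - 1)) powr t
    * wedge_norm G' x v w"
  have "wedge_norm G' x v w \<ge> 0"
    using wedge_norm_orthogonal[OF orth(1)[OF x_v_w(1,2)]] riem_metric_pos_def[OF metric']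
    by (simp add: nrm_eq_form_norm form_norm_nonneg)
  then have R_nonneg: "?R \<ge> 0" using anos b_pos by (simp add: anosov_def)
  have "wedge_norm G' (f (-t) x) (Df (-t) x *v v) (Df (-t) x *v w)
      \<le> \<phi> (f (-t) x) / \<phi> x * ?R"
    by (rule anosov_backward_area_bound[OF metric anos vol dims metric' X_unit orth phi_pos phi_def
          b_pos b_bounds x_v_w])
  also have "\<dots> \<le> ((SUP y. \<phi> y) / (INF y. \<phi> y)) * ?R"
    by (rule mult_right_mono[OF ratio_le_SUP_div_INF[OF compact phi_cont phi_pos] R_nonneg])
  finally show ?thesis by (simp only: mult.assoc)
qed

end
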